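(* Let $1\le N_a<N_b$, $\mathcal N=N_a+N_b$, real $\kappa_1<\dots<\kappa_{\mathcal N}$ with indices taken modulo $\mathcal N$. For $q=(q_1,q_2)\in\mathbb R^2$ define $q_{mn}=q_2-(\kappa_m+\kappa_n)q_1+\kappa_m\kappa_n$ and $\widetilde q_{mn}=(\kappa_m-\kappa_n)q_{mn}$, and let $\theta$ be the Heaviside step function. Then for every $m$ the characteristic function $\epsilon_m(q)=\prod_{k=m}^{m+N_b}\theta(\widetilde q_{k+N_a,k})$ coincides with $$\widetilde\epsilon_m(q)=\prod_{k=m}^{m+N_b}\theta(\widetilde q_{k+N_a,k})\prod_{l=m}^{m+N_b-1}\theta(\widetilde q_{l+N_a,l+1}).$$
   Context: Indices of $\kappa$ are read modulo $\mathcal N$, i.e. $\kappa_{l+\mathcal N}=\kappa_l$. *)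

theory Defs
  imports Complex_Main
begin

definition heaviside :: "real \<Rightarrow> real" where
  "heaviside x = (if x \<ge> 0 then 1 else 0)"

definition qmn :: "(int \<Rightarrow> real) \<Rightarrow> real \<times> real \<Rightarrow> int \<Rightarrow> int \<Rightarrow> real" where
  "qmn \<kappa> q m n = snd q - (\<kappa> m + \<kappa> n) * fst q + \<kappa> m * \<kappa> n"

definition qtilde :: "(int \<Rightarrow> real) \<Rightarrow> real \<times> real \<Rightarrow> int \<Rightarrow> int \<Rightarrow> real" where
  "qtilde \<kappa> q m n = (\<kappa> m - \<kappa> n) * qmn \<kappa> q m n"

definition eps :: "nat \<Rightarrow> nat \<Rightarrow> (int \<Rightarrow> real) \<Rightarrow> int \<Rightarrow> real \<times> real \<Rightarrow> real" where
  "eps Na Nb \<kappa> m q = (\<Prod>k\<in>{m..m + int Nb}. heaviside (qtilde \<kappa> q (k + int Na) k))"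

definition eps_tilde :: "nat \<Rightarrow> nat \<Rightarrow> (int \<Rightarrow> real) \<Rightarrow> int \<Rightarrow> real \<times> real \<Rightarrow> real" where
  "eps_tilde Na Nb \<kappa> m q =
     (\<Prod>k\<in>{m..m + int Nb}. heaviside (qtilde \<kappa> q (k + int Na) k)) *
     (\<Prod>l\<in>{m..m + int Nb - 1}. heaviside (qtilde \<kappa> q (l + int Na) (l + 1)))"

end

theory Submission
  imports Defs
begin

text \<open>
  With \<open>t = q1\<close> and \<open>s = q2 - q1\<^sup>2\<close> one has \<open>q_mn = (\<kappa>_m - t)(\<kappa>_n - t) + s\<close>, so after
  shifting all \<open>\<kappa>\<close> by \<open>t\<close> every factor is the sign of \<open>(x - y)(x y + s)\<close> at a pair of
  points. The extra factor \<open>\<theta>(q~_{l+Na,l+1})\<close> of \<open>\<epsilon>~_m\<close> is squeezed between the factors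
  \<open>\<theta>(q~_{l+Na,l})\<close> and \<open>\<theta>(q~_{l+1+Na,l+1})\<close> of \<open>\<epsilon>_m\<close>. Since \<open>\<kappa>\<close> increases on a period,
  the points \<open>\<kappa>_l, \<kappa>_{l+1}, \<kappa>_{l+Na}, \<kappa>_{l+Na+1}\<close> are in cyclic order, and for cyclically
  ordered points the sign condition on the two outer pairs forces it on the inner
  pair.
\<close>

definition cyclic_order4 :: "'a::linorder \<Rightarrow> 'a \<Rightarrow> 'a \<Rightarrow> 'a \<Rightarrow> bool" where
  "cyclic_order4 x y z w \<longleftrightarrow>
     (x < y \<and> y < z \<and> z < w) \<or> (y < z \<and> z < w \<and> w < x) \<or>
     (z < w \<and> w < x \<and> x < y) \<or> (w < x \<and> x < y \<and> y < z)"

text \<open>In each ordering, the hypotheses fix the signs of \<open>z x + s\<close> and \<open>w y + s\<close>; the sign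
  of \<open>z y + s\<close> then follows by moving one argument monotonically.\<close>
lemma sign_transfer_xyzw:
  fixes x y z w s :: real
  assumes o: "x < y" "y < z" "z < w"
    and h1: "(z - x) * (z * x + s) \<ge> 0" and h2: "(w - y) * (w * y + s) \<ge> 0"
  shows "(z - y) * (z * y + s) \<ge> 0"
proof -
  have a: "z * x + s \<ge> 0" using h1 o by (simp add: zero_le_mult_iff)
  have b: "w * y + s \<ge> 0" using h2 o by (simp add: zero_le_mult_iff)
  have "z * y + s \<ge> 0"
  proof (cases "z \<ge> 0")
    case True
    then have "z * x \<le> z * y" using o by (simp add: mult_left_mono)
    then show ?thesis using a by linarith
  next
    case False
    then have "(w - z) * y \<le> 0" using o by (simp add: mult_nonneg_nonpos)
    then show ?thesis using b by (simp add: algebra_simps)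
  qed
  then show ?thesis using o by simp
qed

lemma sign_transfer_yzwx:
  fixes x y z w s :: real
  assumes o: "y < z" "z < w" "w < x"
    and h1: "(z - x) * (z * x + s) \<ge> 0" and h2: "(w - y) * (w * y + s) \<ge> 0"
  shows "(z - y) * (z * y + s) \<ge> 0"
proof -
  have a: "z * x + s \<le> 0" using h1 o by (simp add: zero_le_mult_iff)
  have b: "w * y + s \<ge> 0" using h2 o by (simp add: zero_le_mult_iff)
  have "z * y + s \<ge> 0"
  proof (cases "y \<le> 0")
    case True
    then have "(z - w) * y \<ge> 0" using o by (simp add: mult_nonpos_nonpos)
    then show ?thesis using b by (simp add: algebra_simps)
  next
    case False
    then have "w * y < x * y" "x * y < x * z" using o by simp_all
    then show ?thesis using a b by (simp add: algebra_simps)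
  qed
  then show ?thesis using o by simp
qed

lemma sign_transfer_zwxy:
  fixes x y z w s :: real
  assumes o: "z < w" "w < x" "x < y"
    and h1: "(z - x) * (z * x + s) \<ge> 0" and h2: "(w - y) * (w * y + s) \<ge> 0"
  shows "(z - y) * (z * y + s) \<ge> 0"
proof -
  have a: "z * x + s \<le> 0" using h1 o by (simp add: zero_le_mult_iff)
  have b: "w * y + s \<le> 0" using h2 o by (simp add: zero_le_mult_iff)
  have "z * y + s \<le> 0"
  proof (cases "y \<ge> 0")
    case True
    then have "(z - w) * y \<le> 0" using o by (simp add: mult_nonpos_nonneg)
    then show ?thesis using b by (simp add: algebra_simps)
  next
    case False
    then have "z * y \<le> z * x" using o by simp
    then show ?thesis using a by linarith
  qed
  then show ?thesis using o by (simp add: mult_nonpos_nonpos)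
qed

lemma sign_transfer_wxyz:
  fixes x y z w s :: real
  assumes o: "w < x" "x < y" "y < z"
    and h1: "(z - x) * (z * x + s) \<ge> 0" and h2: "(w - y) * (w * y + s) \<ge> 0"
  shows "(z - y) * (z * y + s) \<ge> 0"
proof -
  have a: "z * x + s \<ge> 0" using h1 o by (simp add: zero_le_mult_iff)
  have b: "w * y + s \<le> 0" using h2 o by (simp add: zero_le_mult_iff)
  have "z * y + s \<ge> 0"
  proof (cases "z \<ge> 0")
    case True
    then have "z * x \<le> z * y" using o by (simp add: mult_left_mono)
    then show ?thesis using a by linarith
  next
    case False
    then have "z * y < z * x" "z * x < y * x" "y * x < y * w" using o by auto
    then show ?thesis using a b by (simp add: algebra_simps)
  qed
  then show ?thesis using o by simp
qed

lemma sign_transfer_cyclic: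
  fixes x y z w s :: real
  assumes "cyclic_order4 x y z w"
    and "(z - x) * (z * x + s) \<ge> 0" and "(w - y) * (w * y + s) \<ge> 0"
  shows "(z - y) * (z * y + s) \<ge> 0"
  using assms(1) sign_transfer_xyzw[OF _ _ _ assms(2,3)] sign_transfer_yzwx[OF _ _ _ assms(2,3)]
    sign_transfer_zwxy[OF _ _ _ assms(2,3)] sign_transfer_wxyz[OF _ _ _ assms(2,3)]
  unfolding cyclic_order4_def by blast

lemma periodic_shift_mult:
  fixes f :: "int \<Rightarrow> 'a"
  assumes per: "\<And>l. f (l + p) = f l"
  shows "f (l + c * p) = f l"
proof -
  have nat_mult: "f (l + int n * p) = f l" for l n
  proof (induction n arbitrary: l)
    case (Suc n)
    have "f (l + int (Suc n) * p) = f ((l + int n * p) + p)" by (simp add: algebra_simps)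
    then show ?case using per Suc by simp
  qed simp
  show ?thesis
  proof (cases "c \<ge> 0")
    case True
    then show ?thesis using nat_mult[of l "nat c"] by simp
  next
    case False
    then have cancel: "l + c * p + int (nat (- c)) * p = l" by (simp add: algebra_simps)
    have "f l = f (l + c * p + int (nat (- c)) * p)" by (simp only: cancel)
    also have "\<dots> = f (l + c * p)" by (rule nat_mult)
    finally show ?thesis by (rule sym)
  qed
qed

lemma periodic_representative:
  fixes f :: "int \<Rightarrow> 'a"
  assumes per: "\<And>l. f (l + N) = f l" and "N > 0"
  obtains p where "1 \<le> p" "p \<le> N" "\<And>d. f (l + d) = f (p + d)"
proof
  define k where "k = (l - 1) div N"
  define p where "p = (l - 1) mod N + 1"
  show "1 \<le> p" "p \<le> N"
    using pos_mod_sign[OF \<open>N > 0\<close>, of "l - 1"] pos_mod_bound[OF \<open>N > 0\<close>, of "l - 1"]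
    unfolding p_def by linarith+
  fix d
  have "l + d = (p + d) + k * N"
    using mod_div_mult_eq[of "l - 1" N] unfolding p_def k_def by linarith
  then have "f (l + d) = f ((p + d) + k * N)" by (simp only:)
  also have "\<dots> = f (p + d)" using per by (rule periodic_shift_mult)
  finally show "f (l + d) = f (p + d)" .
qed

text \<open>The four cases of \<^const>\<open>cyclic_order4\<close> arise according to how many of the
  shifted indices wrap past \<open>N\<close>.\<close>
lemma cyclic_order4_periodic_increasing:
  fixes f :: "int \<Rightarrow> 'a::linorder"
  assumes mono: "\<And>i j. 1 \<le> i \<Longrightarrow> i < j \<Longrightarrow> j \<le> N \<Longrightarrow> f i < f j"
    and per: "\<And>l. f (l + N) = f l"
    and offsets: "0 < a" "a < b" "b < c" "c < N"
  shows "cyclic_order4 (f l) (f (l + a)) (f (l + b)) (f (l + c))"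
proof -
  have "N > 0" using offsets by linarith
  obtain p where p: "1 \<le> p" "p \<le> N" and rep: "\<And>d. f (l + d) = f (p + d)"
    using periodic_representative[of f N l, OF per \<open>N > 0\<close>] by blast
  have base: "f l = f p" using rep[of 0] by simp
  have wrap: "f (p + d) = f (p + d - N)" for d using per[of "p + d - N"] by simp
  consider "p + c \<le> N" | "p + b \<le> N" "N < p + c" | "p + a \<le> N" "N < p + b" | "N < p + a"
    using offsets by linarith
  then have "cyclic_order4 (f p) (f (p + a)) (f (p + b)) (f (p + c))"
  proof cases
    case 1
    have "f p < f (p + a)" "f (p + a) < f (p + b)" "f (p + b) < f (p + c)"
      by (rule mono; use 1 p offsets in linarith)+
    then show ?thesis unfolding cyclic_order4_def by blast
  next
    case 2
    have "f (p + c - N) < f p" "f p < f (p + a)" "f (p + a) < f (p + b)"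
      by (rule mono; use 2 p offsets in linarith)+
    then show ?thesis unfolding cyclic_order4_def using wrap[of c] by simp
  next
    case 3
    have "f (p + b - N) < f (p + c - N)" "f (p + c - N) < f p" "f p < f (p + a)"
      by (rule mono; use 3 p offsets in linarith)+
    then show ?thesis unfolding cyclic_order4_def using wrap[of b] wrap[of c] by simp
  next
    case 4
    have "f (p + a - N) < f (p + b - N)" "f (p + b - N) < f (p + c - N)" "f (p + c - N) < f p"
      by (rule mono; use 4 p offsets in linarith)+
    then show ?thesis unfolding cyclic_order4_def using wrap[of a] wrap[of b] wrap[of c] by simp
  qed
  then show ?thesis by (simp only: base rep)
qed

lemma qtilde_shifted:
  "qtilde \<kappa> q m n = (\<kappa> m - \<kappa> n) * ((\<kappa> m - fst q) * (\<kappa> n - fst q) + (snd q - fst q ^ 2))"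
  unfolding qtilde_def qmn_def by (simp add: algebra_simps power2_eq_square)

lemma qtilde_inner_nonneg:
  assumes "cyclic_order4 (\<kappa> l) (\<kappa> (l + 1)) (\<kappa> (l + d)) (\<kappa> (l + d + 1))"
    and "qtilde \<kappa> q (l + d) l \<ge> 0" and "qtilde \<kappa> q (l + 1 + d) (l + 1) \<ge> 0"
  shows "qtilde \<kappa> q (l + d) (l + 1) \<ge> 0"
proof -
  let ?t = "fst q" and ?s = "snd q - fst q ^ 2"
  have "cyclic_order4 (\<kappa> l - ?t) (\<kappa> (l + 1) - ?t) (\<kappa> (l + d) - ?t) (\<kappa> (l + d + 1) - ?t)"
    using assms(1) unfolding cyclic_order4_def by auto
  from sign_transfer_cyclic[OF this, of ?s] show ?thesis
    using assms(2,3) unfolding qtilde_shifted by (simp add: algebra_simps)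
qed

lemma prod_heaviside:
  assumes "finite A"
  shows "(\<Prod>k\<in>A. heaviside (f k)) = (if \<forall>k\<in>A. f k \<ge> 0 then 1 else 0)"
  using assms by (auto simp: heaviside_def intro: prod_zero)

theorem lemma5p3:
  fixes Na Nb :: nat and \<kappa> :: "int \<Rightarrow> real"
  assumes "1 \<le> Na" and "Na < Nb"
    and "\<And>i j. 1 \<le> i \<Longrightarrow> i < j \<Longrightarrow> j \<le> int (Na + Nb) \<Longrightarrow> \<kappa> i < \<kappa> j"
    and "\<And>l. \<kappa> (l + int (Na + Nb)) = \<kappa> l"
  shows "\<forall>m q. eps Na Nb \<kappa> m q = eps_tilde Na Nb \<kappa> m q"
proof (intro allI)
  fix m q
  have inner: "qtilde \<kappa> q (l + int Na) (l + 1) \<ge> 0"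
    if "qtilde \<kappa> q (l + int Na) l \<ge> 0" "qtilde \<kappa> q (l + 1 + int Na) (l + 1) \<ge> 0" for l
  proof (cases "Na = 1")
    case True \<comment> \<open>the inner factor is then \<open>\<theta>(0) = 1\<close>\<close>
    then show ?thesis by (simp add: qtilde_def add.commute)
  next
    case False
    with assms have "cyclic_order4 (\<kappa> l) (\<kappa> (l + 1)) (\<kappa> (l + int Na)) (\<kappa> (l + int Na + 1))"
      using cyclic_order4_periodic_increasing[of "int (Na + Nb)" \<kappa> 1 "int Na" "int Na + 1" l]
      by (simp add: add.assoc)
    then show ?thesis using that by (rule qtilde_inner_nonneg)
  qed
  show "eps Na Nb \<kappa> m q = eps_tilde Na Nb \<kappa> m q"
    unfolding eps_def eps_tilde_def prod_heaviside[OF finite_atLeastAtMost_int]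
    using inner by auto
qed

end
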